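(* If $N\le4$, then $\mathcal{SE}_2=\mathcal{SS}$: every superenergy tensor $T_{ab}\{\Omega_{[p]}\}$ of an arbitrary $p$-form $\Omega$ ($1\le p\le N$) equals the superenergy tensor of some simple form.
   Context: Lorentzian metric $g_{ab}$ of signature $(+,-,\dots,-)$ in dimension $N$ with a time orientation. Superenergy tensor of a $p$-form ($1\le p\le N$): $T_{ab}\{\Omega_{[p]}\}=\frac{(-1)^{p-1}}{(p-1)!}[\Omega_{a a_2\dots a_p}\Omega_b{}^{a_2\dots a_p}-\frac{1}{2p}(\Omega\cdot\Omega)g_{ab}]$, $\Omega\cdot\Omega$ full contraction (for an $N$-form $f\eta$ it is $\tfrac12f^2g_{ab}$). $\mathcal{SE}_2$ is the set of all such tensors for arbitrary $p$-forms; $\mathcal{SS}\subset\mathcal{SE}_2$ is the subset arising from simple $p$-forms (wedge products of $p$ linearly independent 1-forms). *)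

theory Defs
  imports Complex_Main "HOL-Combinatorics.Permutations"
begin

text \<open>Components are taken with respect to a fixed coordinate basis of an
N-dimensional real vector space; indices range over 0..N-1.
A covariant p-tensor is a function from index lists of length p to reals.\<close>

definition idx :: "nat \<Rightarrow> nat \<Rightarrow> nat list set" where
  "idx N p = {xs. length xs = p \<and> set xs \<subseteq> {..<N}}"

definition eta :: "nat \<Rightarrow> nat \<Rightarrow> real" where
  "eta i j = (if i \<noteq> j then 0 else if i = 0 then 1 else -1)"

text \<open>g (lower components g_ab) is a Lorentzian metric of signature (+,-,...,-):
symmetric and admitting a basis e_0..e_{N-1} (e a i = a-th component of e_i)
which is orthonormal with g(e_i,e_j) = eta_ij.\<close>
definition lorentzian :: "nat \<Rightarrow> (nat \<Rightarrow> nat \<Rightarrow> real) \<Rightarrow> bool" where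
  "lorentzian N g \<longleftrightarrow> (\<forall>a<N. \<forall>b<N. g a b = g b a) \<and>
     (\<exists>e :: nat \<Rightarrow> nat \<Rightarrow> real. \<forall>i<N. \<forall>j<N.
        (\<Sum>a<N. \<Sum>b<N. g a b * e a i * e b j) = eta i j)"

definition inverse_metric :: "nat \<Rightarrow> (nat \<Rightarrow> nat \<Rightarrow> real) \<Rightarrow> (nat \<Rightarrow> nat \<Rightarrow> real) \<Rightarrow> bool" where
  "inverse_metric N g gi \<longleftrightarrow>
     (\<forall>a<N. \<forall>c<N. (\<Sum>b<N. g a b * gi b c) = (if a = c then 1 else 0))"

definition is_form :: "nat \<Rightarrow> nat \<Rightarrow> (nat list \<Rightarrow> real) \<Rightarrow> bool" where
  "is_form N p \<Omega> \<longleftrightarrow> (\<forall>xs \<in> idx N p. \<forall>i<p. \<forall>j<p. i \<noteq> j \<longrightarrow>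
      \<Omega> (xs[i := xs ! j, j := xs ! i]) = - \<Omega> xs)"

definition contr :: "(nat \<Rightarrow> nat \<Rightarrow> real) \<Rightarrow> nat list \<Rightarrow> nat list \<Rightarrow> real" where
  "contr gi xs ys = (\<Prod>k<length xs. gi (xs ! k) (ys ! k))"

definition fdot :: "nat \<Rightarrow> (nat \<Rightarrow> nat \<Rightarrow> real) \<Rightarrow> nat \<Rightarrow> (nat list \<Rightarrow> real) \<Rightarrow> real" where
  "fdot N gi p \<Omega> = (\<Sum>xs\<in>idx N p. \<Sum>ys\<in>idx N p. \<Omega> xs * \<Omega> ys * contr gi xs ys)"

definition superenergy ::
  "nat \<Rightarrow> (nat \<Rightarrow> nat \<Rightarrow> real) \<Rightarrow> (nat \<Rightarrow> nat \<Rightarrow> real) \<Rightarrow> nat \<Rightarrow> (nat list \<Rightarrow> real)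
     \<Rightarrow> nat \<Rightarrow> nat \<Rightarrow> real" where
  "superenergy N g gi p \<Omega> a b =
     (-1) ^ (p - 1) / fact (p - 1) *
     ((\<Sum>xs\<in>idx N (p - 1). \<Sum>ys\<in>idx N (p - 1). \<Omega> (a # xs) * \<Omega> (b # ys) * contr gi xs ys)
      - 1 / (2 * real p) * fdot N gi p \<Omega> * g a b)"

text \<open>Wedge product theta_0 ^ ... ^ theta_{p-1} of 1-forms (theta i a = a-th component of theta_i).\<close>
definition wedge :: "nat \<Rightarrow> (nat \<Rightarrow> nat \<Rightarrow> real) \<Rightarrow> nat list \<Rightarrow> real" where
  "wedge p \<theta> xs = (\<Sum>\<sigma> \<in> {\<sigma>. \<sigma> permutes {..<p}}. of_int (sign \<sigma>) * (\<Prod>i<p. \<theta> (\<sigma> i) (xs ! i)))"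

definition lin_indep_forms :: "nat \<Rightarrow> nat \<Rightarrow> (nat \<Rightarrow> nat \<Rightarrow> real) \<Rightarrow> bool" where
  "lin_indep_forms N p \<theta> \<longleftrightarrow>
     (\<forall>c :: nat \<Rightarrow> real. (\<forall>a<N. (\<Sum>i<p. c i * \<theta> i a) = 0) \<longrightarrow> (\<forall>i<p. c i = 0))"

end

theory Submission
  imports Defs "Jordan_Normal_Form.Determinant"
begin

(* 1-forms and N-forms are always simple, every 2-form in dimension N <= 3 satisfies the Pluecker
   relations for trivial reasons, and a 3-form in dimension 4 is fixed by four components that are
   easily matched by a wedge of three 1-forms; for all these the form itself is simple.
   The remaining case is a 2-form F in dimension 4. In an orthonormal frame its superenergy tensor is
   the Maxwell tensor, which is invariant under the duality rotations F -> cos t F + sin t *F.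
   The Pluecker invariant F01 F23 - F02 F13 + F03 F12 changes sign under F -> *F, so by the
   intermediate value theorem it vanishes for some t. The rotated form then satisfies all Pluecker
   relations, hence is simple, and has the same superenergy tensor as F. *)

lemma idx_0: "idx N 0 = {[]}"
  unfolding idx_def by auto

lemma idx_Suc: "idx N (Suc p) = (\<lambda>(x, xs). x # xs) ` ({..<N} \<times> idx N p)"
  unfolding idx_def by (force simp: length_Suc_conv)

lemma sum_idx_Suc: "(\<Sum>xs\<in>idx N (Suc p). h xs) = (\<Sum>x<N. \<Sum>xs\<in>idx N p. h (x # xs))"
proof -
  have "inj_on (\<lambda>(x, xs). x # xs) ({..<N} \<times> idx N p)"
    by (auto simp: inj_on_def)
  then show ?thesis
    unfolding idx_Suc by (simp add: sum.reindex sum.cartesian_product split_def)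
qed

lemma in_idx_iff: "xs \<in> idx N p \<longleftrightarrow> length xs = p \<and> (\<forall>x\<in>set xs. x < N)"
  unfolding idx_def by auto

lemma idx_SucE:
  assumes "xs \<in> idx N (Suc p)"
  obtains x ys where "xs = x # ys" "x < N" "ys \<in> idx N p"
  using assms unfolding idx_Suc by auto

lemma idx_twoE:
  assumes "xs \<in> idx N 2"
  obtains x y where "xs = [x, y]" "x < N" "y < N"
  using assms unfolding numeral_2_eq_2 by (elim idx_SucE) (auto simp: idx_0)

lemma sorted_idx_self_eq_upt:
  assumes "xs \<in> idx N N" "sorted_wrt (<) xs"
  shows "xs = [0..<N]"
proof -
  have "distinct xs" "length xs = N" "set xs \<subseteq> {..<N}"
    using assms by (auto simp: idx_def strict_sorted_iff)
  then have "set xs = {..<N}"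
    by (metis card_lessThan card_subset_eq distinct_card finite_lessThan)
  then show ?thesis
    using assms(2) by (simp add: strict_sorted_equal lessThan_atLeast0)
qed

section \<open>Wedge products as determinants\<close>

definition wedge_matrix :: "nat \<Rightarrow> (nat \<Rightarrow> nat \<Rightarrow> real) \<Rightarrow> nat list \<Rightarrow> real mat" where
  "wedge_matrix q \<theta> xs = mat q q (\<lambda>(i, j). \<theta> j (xs ! i))"

lemma wedge_matrix_carrier [simp]: "wedge_matrix q \<theta> xs \<in> carrier_mat q q"
  unfolding wedge_matrix_def by simp

lemma wedge_eq_det: "wedge q \<theta> xs = det (wedge_matrix q \<theta> xs)"
  unfolding det_def'[OF wedge_matrix_carrier] wedge_def lessThan_atLeast0
  by (intro sum.cong refl arg_cong2[where f = "(*)"] prod.cong)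
     (auto simp: wedge_matrix_def permutes_in_image)

lemma wedge_Cons:
  "wedge (Suc q) \<theta> (x # xs) =
     (\<Sum>j<Suc q. (-1) ^ j * \<theta> j x * wedge q (\<lambda>i. \<theta> (if i < j then i else Suc i)) xs)"
proof -
  let ?W = "wedge_matrix (Suc q) \<theta> (x # xs)"
  have minor: "mat_delete ?W 0 j = wedge_matrix q (\<lambda>i. \<theta> (if i < j then i else Suc i)) xs" for j
    unfolding mat_delete_def wedge_matrix_def by (rule eq_matI) auto
  have "wedge (Suc q) \<theta> (x # xs) = (\<Sum>j<Suc q. ?W $$ (0, j) * cofactor ?W 0 j)"
    unfolding wedge_eq_det by (rule laplace_expansion_row) auto
  also have "\<dots> = (\<Sum>j<Suc q. (-1) ^ j * \<theta> j x * wedge q (\<lambda>i. \<theta> (if i < j then i else Suc i)) xs)"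
    by (intro sum.cong refl) (simp add: cofactor_def minor wedge_eq_det, simp add: wedge_matrix_def)
  finally show ?thesis .
qed

lemma wedge_Nil [simp]: "wedge 0 \<theta> xs = 1"
  by (simp add: wedge_eq_det wedge_matrix_def)

lemma wedge_one: "wedge 1 \<theta> [x] = \<theta> 0 x"
  using wedge_Cons[of 0 \<theta> x "[]"] by simp

lemma wedge_two: "wedge 2 \<theta> [x, y] = \<theta> 0 x * \<theta> 1 y - \<theta> 1 x * \<theta> 0 y"
  using wedge_Cons[of 1 \<theta> x "[y]"] wedge_one by (simp add: numeral_2_eq_2)

lemma is_form_wedge: "is_form N q (wedge q \<theta>)"
  unfolding is_form_def
proof (intro ballI allI impI)
  fix xs i j assume xs: "xs \<in> idx N q" and ij: "i < q" "j < q" "i \<noteq> j"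
  have "wedge_matrix q \<theta> (xs[i := xs ! j, j := xs ! i]) = swaprows i j (wedge_matrix q \<theta> xs)"
    using xs ij by (intro eq_matI) (auto simp: wedge_matrix_def nth_list_update idx_def)
  then show "wedge q \<theta> (xs[i := xs ! j, j := xs ! i]) = - wedge q \<theta> xs"
    using det_swaprows[OF ij wedge_matrix_carrier] by (simp add: wedge_eq_det)
qed

lemma lin_indep_forms_if_wedge_nonzero:
  assumes xs: "xs \<in> idx N q" and nz: "wedge q \<theta> xs \<noteq> 0"
  shows "lin_indep_forms N q \<theta>"
  unfolding lin_indep_forms_def
proof (intro allI impI)
  fix c :: "nat \<Rightarrow> real" and i
  assume c: "\<forall>a<N. (\<Sum>i<q. c i * \<theta> i a) = 0" and i: "i < q"
  have "wedge_matrix q \<theta> xs *\<^sub>v vec q c = 0\<^sub>v q"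
  proof (rule eq_vecI)
    fix r assume "r < dim_vec (0\<^sub>v q :: real vec)"
    then have r: "r < q" and "xs ! r < N"
      using xs by (auto simp: idx_def subset_iff)
    then have "(\<Sum>k<q. c k * \<theta> k (xs ! r)) = 0"
      using c by blast
    then show "(wedge_matrix q \<theta> xs *\<^sub>v vec q c) $ r = 0\<^sub>v q $ r"
      using r by (simp add: scalar_prod_def wedge_matrix_def lessThan_atLeast0 mult.commute)
  qed (simp add: wedge_matrix_def)
  moreover have "det (wedge_matrix q \<theta> xs) \<noteq> 0"
    using nz by (simp add: wedge_eq_det)
  ultimately have "vec q c = 0\<^sub>v q"
    using det_0_iff_vec_prod_zero[OF wedge_matrix_carrier] by (metis vec_carrier)
  then show "c i = 0"
    using i by (metis index_vec index_zero_vec(1))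
qed

section \<open>Forms are determined by their strictly increasing components\<close>

definition index_weight :: "nat list \<Rightarrow> nat" where
  "index_weight xs = (\<Sum>k<length xs. k * xs ! k)"

lemma index_weight_swap_descent:
  assumes i: "Suc i < length xs" and descent: "xs ! Suc i < xs ! i"
  shows "index_weight xs < index_weight (xs[i := xs ! Suc i, Suc i := xs ! i])"
proof -
  let ?ys = "xs[i := xs ! Suc i, Suc i := xs ! i]" and ?R = "{..<length xs} - {i, Suc i}"
  have split: "(\<Sum>k<length xs. f k) = f i + f (Suc i) + (\<Sum>k\<in>?R. f k)" for f :: "nat \<Rightarrow> nat"
    using i by (subst sum.subset_diff[of "{i, Suc i}"]) auto
  have rest: "(\<Sum>k\<in>?R. k * ?ys ! k) = (\<Sum>k\<in>?R. k * xs ! k)"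
    by (intro sum.cong refl) (auto simp: nth_list_update)
  have "index_weight xs = i * xs ! i + Suc i * xs ! Suc i + (\<Sum>k\<in>?R. k * xs ! k)"
    unfolding index_weight_def split[of "\<lambda>k. k * xs ! k"] ..
  also have "\<dots> < i * xs ! Suc i + Suc i * xs ! i + (\<Sum>k\<in>?R. k * xs ! k)"
    using descent by (simp add: algebra_simps)
  also have "\<dots> = index_weight ?ys"
    unfolding index_weight_def length_list_update split[of "\<lambda>k. k * ?ys ! k"] rest
    using i by (simp add: nth_list_update)
  finally show ?thesis .
qed

lemma index_weight_le:
  assumes "xs \<in> idx N p"
  shows "index_weight xs \<le> p * (p * N)"
proof -
  have len: "length xs = p" and bound: "\<And>k. k < p \<Longrightarrow> xs ! k < N"
    using assms by (auto simp: in_idx_iff)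
  have "index_weight xs \<le> (\<Sum>k<p. p * N)"
    unfolding index_weight_def len
    by (intro sum_mono mult_le_mono) (auto dest: bound)
  then show ?thesis by simp
qed

lemma form_zero_if_zero_on_sorted:
  assumes form: "is_form N p \<Omega>" and sorted_zero: "\<forall>xs\<in>idx N p. sorted_wrt (<) xs \<longrightarrow> \<Omega> xs = 0"
    and xs: "xs \<in> idx N p"
  shows "\<Omega> xs = 0"
  using xs
proof (induction "p * (p * N) - index_weight xs" arbitrary: xs rule: less_induct)
  case less
  show ?case
  proof (cases "sorted_wrt (<) xs")
    case True
    then show ?thesis using sorted_zero less.prems by blast
  next
    case False
    then obtain i where i: "Suc i < length xs" and le: "xs ! Suc i \<le> xs ! i"
      by (auto simp: sorted_wrt_iff_nth_Suc_transp not_less)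
    let ?ys = "xs[i := xs ! Suc i, Suc i := xs ! i]"
    have swap: "\<Omega> ?ys = - \<Omega> xs"
      using form less.prems i unfolding is_form_def idx_def by auto
    show ?thesis
    proof (cases "xs ! Suc i = xs ! i")
      case True
      then have "?ys = xs" by (metis list_update_id)
      then show ?thesis using swap by simp
    next
      case False
      have ys: "?ys \<in> idx N p"
        using less.prems i by (auto simp: in_idx_iff dest: set_update_subset_insert[THEN subsetD])
      have "index_weight xs < index_weight ?ys"
        using False le i by (intro index_weight_swap_descent) auto
      then have "\<Omega> ?ys = 0"
        using less.hyps[OF _ ys] index_weight_le[OF ys] by simp
      then show ?thesis using swap by simp
    qed
  qed
qed

lemma forms_eq_if_eq_on_sorted:
  assumes "is_form N p \<Omega>" "is_form N p \<Phi>"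
    and "\<forall>xs\<in>idx N p. sorted_wrt (<) xs \<longrightarrow> \<Omega> xs = \<Phi> xs" "xs \<in> idx N p"
  shows "\<Omega> xs = \<Phi> xs"
  using form_zero_if_zero_on_sorted[of N p "\<lambda>xs. \<Omega> xs - \<Phi> xs"] assms
  unfolding is_form_def by auto

section \<open>Decomposable forms\<close>

lemma superenergy_cong:
  assumes "\<forall>xs\<in>idx N p. \<Omega> xs = \<Phi> xs" "1 \<le> p" "a < N" "b < N"
  shows "superenergy N g gi p \<Omega> a b = superenergy N g gi p \<Phi> a b"
proof -
  obtain r where p: "p = Suc r" using assms(2) by (cases p) auto
  have "fdot N gi p \<Omega> = fdot N gi p \<Phi>"
    unfolding fdot_def using assms(1) by (intro sum.cong refl) auto
  moreover have "\<Omega> (x # xs) = \<Phi> (x # xs)" if "x \<in> {a, b}" "xs \<in> idx N r" for x xs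
    using assms that unfolding p idx_Suc by auto
  ultimately show ?thesis
    unfolding superenergy_def p by simp
qed

definition simple_superenergy ::
  "nat \<Rightarrow> (nat \<Rightarrow> nat \<Rightarrow> real) \<Rightarrow> (nat \<Rightarrow> nat \<Rightarrow> real) \<Rightarrow> nat \<Rightarrow> (nat list \<Rightarrow> real) \<Rightarrow> bool" where
  "simple_superenergy N g gi p \<Omega> \<longleftrightarrow> (\<exists>q \<theta>. 1 \<le> q \<and> q \<le> N \<and> lin_indep_forms N q \<theta> \<and>
     (\<forall>a<N. \<forall>b<N. superenergy N g gi p \<Omega> a b = superenergy N g gi q (wedge q \<theta>) a b))"

lemma simple_superenergyI:
  assumes "1 \<le> q" "q \<le> N" "xs \<in> idx N q" "wedge q \<theta> xs \<noteq> 0"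
    and "\<And>a b. a < N \<Longrightarrow> b < N \<Longrightarrow> superenergy N g gi p \<Omega> a b = superenergy N g gi q (wedge q \<theta>) a b"
  shows "simple_superenergy N g gi p \<Omega>"
  unfolding simple_superenergy_def using assms lin_indep_forms_if_wedge_nonzero by blast

definition decomposable :: "nat \<Rightarrow> nat \<Rightarrow> (nat list \<Rightarrow> real) \<Rightarrow> bool" where
  "decomposable N p \<Omega> \<longleftrightarrow> (\<exists>\<theta>. \<forall>xs\<in>idx N p. wedge p \<theta> xs = \<Omega> xs)"

lemma simple_superenergy_if_decomposable:
  assumes "decomposable N p \<Omega>" "1 \<le> p" "p \<le> N" "xs \<in> idx N p" "\<Omega> xs \<noteq> 0"
  shows "simple_superenergy N g gi p \<Omega>"
proof -
  obtain \<theta> where \<theta>: "\<forall>xs\<in>idx N p. wedge p \<theta> xs = \<Omega> xs"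
    using assms(1) unfolding decomposable_def by blast
  show ?thesis
    using assms(2-5) \<theta> superenergy_cong[of N p \<Omega> "wedge p \<theta>"]
    by (intro simple_superenergyI[of p N xs \<theta>]) auto
qed

lemma decomposable_if_eq_on_sorted:
  assumes "is_form N p \<Omega>" "\<forall>xs\<in>idx N p. sorted_wrt (<) xs \<longrightarrow> wedge p \<theta> xs = \<Omega> xs"
  shows "decomposable N p \<Omega>"
  unfolding decomposable_def
  using forms_eq_if_eq_on_sorted[OF is_form_wedge assms(1)] assms(2) by blast

lemma decomposable_one_form: "decomposable N 1 \<Omega>"
  unfolding decomposable_def One_nat_def
  by (rule exI[of _ "\<lambda>_ x. \<Omega> [x]"]) (auto simp: idx_Suc idx_0 wedge_one[simplified])

lemma decomposable_top_form:
  assumes "is_form N N \<Omega>" "0 < N"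
  shows "decomposable N N \<Omega>"
proof (rule decomposable_if_eq_on_sorted[OF assms(1)], intro ballI impI)
  define \<theta> :: "nat \<Rightarrow> nat \<Rightarrow> real"
    where "\<theta> r x = (if r \<noteq> x then 0 else if r = 0 then \<Omega> [0..<N] else 1)" for r x
  fix xs assume "xs \<in> idx N N" "sorted_wrt (<) xs"
  then have xs: "xs = [0..<N]" by (rule sorted_idx_self_eq_upt)
  have "upper_triangular (wedge_matrix N \<theta> xs)"
    unfolding xs by (auto simp: upper_triangular_def wedge_matrix_def \<theta>_def)
  then have "wedge N \<theta> xs = prod_list (diag_mat (wedge_matrix N \<theta> xs))"
    unfolding wedge_eq_det by (rule det_upper_triangular[OF _ wedge_matrix_carrier])
  also have "\<dots> = prod_list (map (\<lambda>i. \<theta> i i) [0..<N])"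
    unfolding diag_mat_def by (intro arg_cong[where f = prod_list] map_cong) (auto simp: wedge_matrix_def xs)
  also have "\<dots> = (\<Prod>i<N. \<theta> i i)"
    by (simp add: prod.distinct_set_conv_list[symmetric] lessThan_atLeast0)
  also have "\<dots> = \<Omega> xs"
    using assms(2) by (simp add: \<theta>_def xs prod.If_cases lessThan_atLeast0)
  finally show "wedge N \<theta> xs = \<Omega> xs" .
qed

lemma two_form_skew:
  assumes form: "is_form N 2 \<Omega>" and "x < N" "y < N"
  shows "\<Omega> [y, x] = - \<Omega> [x, y]"
proof -
  have "[x, y] \<in> idx N 2"
    using assms by (simp add: in_idx_iff)
  from form[unfolded is_form_def, rule_format, OF this, of 0 1] show ?thesis
    by simp
qed

lemma decomposition_if_plucker:
  fixes w :: "nat \<Rightarrow> nat \<Rightarrow> real"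
  assumes "w k l \<noteq> 0"
    and "\<And>x y. x \<in> S \<Longrightarrow> y \<in> S \<Longrightarrow> w x y * w k l = w k x * w l y - w k y * w l x"
  shows "\<exists>u v. \<forall>x\<in>S. \<forall>y\<in>S. w x y = u x * v y - v x * u y"
  using assms by (intro exI[of _ "\<lambda>x. w k x / w k l"] exI[of _ "w l"]) (auto simp: field_simps)

lemma decomposable_two_formI:
  assumes "\<forall>x<N. \<forall>y<N. \<Omega> [x, y] = u x * v y - v x * u y"
  shows "decomposable N 2 \<Omega>"
  unfolding decomposable_def
  using assms by (intro exI[of _ "\<lambda>r. if r = 0 then u else v"]) (auto simp: wedge_two elim: idx_twoE)

lemma plucker_dim_le_3:
  fixes w :: "nat \<Rightarrow> nat \<Rightarrow> real"
  assumes "N \<le> 3" and skew: "\<And>x y. x < N \<Longrightarrow> y < N \<Longrightarrow> w y x = - w x y"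
    and "x < N" "y < N" "k < N" "l < N"
  shows "w x y * w k l = w k x * w l y - w k y * w l x"
proof -
  have diag: "w z z = 0" if "z < N" for z
    using skew[OF that that] by simp
  have "x = y \<or> x = k \<or> x = l \<or> y = k \<or> y = l \<or> k = l"
    using assms by arith
  then show ?thesis
  proof (elim disjE)
    assume "x = y" then show ?thesis using diag \<open>x < N\<close> by simp
  next
    assume "x = k" then show ?thesis using diag skew[of k l] assms(3-6) by simp
  next
    assume "x = l" then show ?thesis using diag skew[of k l] assms(3-6) by simp
  next
    assume "y = k" then show ?thesis using diag skew[of k l] skew[of x k] assms(3-6) by simp
  next
    assume "y = l" then show ?thesis using diag skew[of k l] skew[of x l] assms(3-6) by simp
  next
    assume "k = l" then show ?thesis using diag \<open>k < N\<close> by simp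
  qed
qed

lemma decomposable_two_form_dim_le_3:
  assumes form: "is_form N 2 \<Omega>" and "N \<le> 3"
  shows "decomposable N 2 \<Omega>"
proof (cases "\<exists>k<N. \<exists>l<N. \<Omega> [k, l] \<noteq> 0")
  case True
  then obtain k l where kl: "k < N" "l < N" "\<Omega> [k, l] \<noteq> 0" by blast
  have "\<exists>u v. \<forall>x\<in>{..<N}. \<forall>y\<in>{..<N}. \<Omega> [x, y] = u x * v y - v x * u y"
  proof (rule decomposition_if_plucker[where w = "\<lambda>x y. \<Omega> [x, y]", OF kl(3)])
    fix x y assume "x \<in> {..<N}" "y \<in> {..<N}"
    then show "\<Omega> [x, y] * \<Omega> [k, l] = \<Omega> [k, x] * \<Omega> [l, y] - \<Omega> [k, y] * \<Omega> [l, x]"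
      using kl
      by (intro plucker_dim_le_3[OF \<open>N \<le> 3\<close>, where w = "\<lambda>x y. \<Omega> [x, y]"] two_form_skew[OF form])
        auto
  qed
  then show ?thesis
    by (auto intro: decomposable_two_formI)
next
  case False
  then show ?thesis
    by (intro decomposable_two_formI[where u = "\<lambda>_. 0" and v = "\<lambda>_. 0"]) auto
qed

lemma decomposable_three_form_dim4_if_minors:
  assumes form: "is_form 4 3 \<Omega>"
    and "wedge 3 \<theta> [1, 2, 3] = \<Omega> [1, 2, 3]" "wedge 3 \<theta> [0, 2, 3] = \<Omega> [0, 2, 3]"
    and "wedge 3 \<theta> [0, 1, 3] = \<Omega> [0, 1, 3]" "wedge 3 \<theta> [0, 1, 2] = \<Omega> [0, 1, 2]"
  shows "decomposable 4 3 \<Omega>"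
proof (rule decomposable_if_eq_on_sorted[OF form], intro ballI impI)
  fix xs assume "xs \<in> idx 4 3" "sorted_wrt (<) xs"
  then have "xs = [1, 2, 3] \<or> xs = [0, 2, 3] \<or> xs = [0, 1, 3] \<or> xs = [0, 1, 2]"
    unfolding numeral_3_eq_3 by (elim idx_SucE) (auto simp: idx_0)
  then show "wedge 3 \<theta> xs = \<Omega> xs"
    using assms(2-5) by blast
qed

lemma decomposable_three_form_dim4:
  assumes form: "is_form 4 3 \<Omega>"
  shows "decomposable 4 3 \<Omega>"
proof -
  define A0 A1 A2 A3 where "A0 = \<Omega> [1, 2, 3]" and "A1 = \<Omega> [0, 2, 3]"
    and "A2 = \<Omega> [0, 1, 3]" and "A3 = \<Omega> [0, 1, 2]"
  note minors = decomposable_three_form_dim4_if_minors[OF form,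
      unfolded A0_def[symmetric] A1_def[symmetric] A2_def[symmetric] A3_def[symmetric]]
  consider "A0 \<noteq> 0" | "A1 \<noteq> 0" | "A2 \<noteq> 0" | "A0 = 0" "A1 = 0" "A2 = 0" by blast
  then show ?thesis
  proof cases
    case 1
    let ?M = "[[A1 / A0, 1, 0, 0], [- A2 / A0, 0, 1, 0], [A3, 0, 0, A0]]"
    show ?thesis
      by (rule minors[of "\<lambda>r x. ?M ! r ! x"])
        (use 1 in \<open>simp_all add: numeral_eq_Suc wedge_Cons lessThan_Suc field_simps\<close>)
  next
    case 2
    let ?M = "[[1, A0 / A1, 0, 0], [0, A2 / A1, 1, 0], [0, - A3, 0, A1]]"
    show ?thesis
      by (rule minors[of "\<lambda>r x. ?M ! r ! x"])
        (use 2 in \<open>simp_all add: numeral_eq_Suc wedge_Cons lessThan_Suc field_simps\<close>)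
  next
    case 3
    let ?M = "[[1, 0, - A0 / A2, 0], [0, 1, A1 / A2, 0], [0, 0, A3, A2]]"
    show ?thesis
      by (rule minors[of "\<lambda>r x. ?M ! r ! x"])
        (use 3 in \<open>simp_all add: numeral_eq_Suc wedge_Cons lessThan_Suc field_simps\<close>)
  next
    case 4
    \<comment> \<open>A3 may vanish too; then x / 0 = 0 makes the third row zero, matching \<Omega> = 0.\<close>
    let ?M = "[[1, 0, 0, A0 / A3], [0, 1, 0, - A1 / A3], [0, 0, A3, A2]]"
    show ?thesis
      by (rule minors[of "\<lambda>r x. ?M ! r ! x"])
        (use 4 in \<open>simp_all add: numeral_eq_Suc wedge_Cons lessThan_Suc field_simps\<close>)
  qed
qed

section \<open>Component matrices and orthonormal frames\<close>

definition comp_mat :: "nat \<Rightarrow> (nat \<Rightarrow> nat \<Rightarrow> real) \<Rightarrow> real mat" where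
  "comp_mat N h = mat N N (\<lambda>(i, j). h i j)"

lemma comp_mat_carrier [simp]: "comp_mat N h \<in> carrier_mat N N"
  and comp_mat_dim [simp]: "dim_row (comp_mat N h) = N" "dim_col (comp_mat N h) = N"
  and comp_mat_index [simp]: "i < N \<Longrightarrow> j < N \<Longrightarrow> comp_mat N h $$ (i, j) = h i j"
  unfolding comp_mat_def by simp_all

lemma mult_square_mat_carrier [simp]:
  "A \<in> carrier_mat N N \<Longrightarrow> B \<in> carrier_mat N N \<Longrightarrow> A * B \<in> carrier_mat N N"
  by (rule mult_carrier_mat)

lemma index_mult_square_mat:
  "A \<in> carrier_mat N N \<Longrightarrow> B \<in> carrier_mat N N \<Longrightarrow> i < N \<Longrightarrow> j < N \<Longrightarrow>
     (A * B) $$ (i, j) = (\<Sum>k<N. A $$ (i, k) * B $$ (k, j))"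
  by (simp add: scalar_prod_def lessThan_atLeast0)

lemma nonzero_mat_entry:
  assumes "A \<in> carrier_mat n m" "A \<noteq> 0\<^sub>m n m"
  obtains i j where "i < n" "j < m" "A $$ (i, j) \<noteq> 0"
proof -
  have "\<exists>i<n. \<exists>j<m. A $$ (i, j) \<noteq> 0"
  proof (rule ccontr)
    assume "\<not> ?thesis"
    then have "A = 0\<^sub>m n m"
      using assms(1) by (intro eq_matI) auto
    then show False
      using assms(2) by simp
  qed
  then show ?thesis
    using that by blast
qed

lemma congruence_cancel:
  fixes A B Y :: "real mat"
  assumes "A \<in> carrier_mat N N" "B \<in> carrier_mat N N" "Y \<in> carrier_mat N N" "B * A = 1\<^sub>m N"
  shows "A\<^sup>T * (B\<^sup>T * Y * B) * A = Y"
proof -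
  have "A\<^sup>T * B\<^sup>T = 1\<^sub>m N"
    using assms by (metis transpose_mult transpose_one)
  moreover have "A\<^sup>T * (B\<^sup>T * Y * B) * A = (A\<^sup>T * B\<^sup>T) * Y * (B * A)"
    using assms(1-3) by (simp add: assoc_mult_mat[of _ N N _ N _ N])
  ultimately show ?thesis
    using assms by simp
qed

lemma index_congruence:
  assumes "F \<in> carrier_mat N N" "M \<in> carrier_mat N N" "a < N" "b < N"
  shows "(F\<^sup>T * M * F) $$ (a, b) = (\<Sum>k<N. \<Sum>l<N. F $$ (k, a) * M $$ (k, l) * F $$ (l, b))"
proof -
  have "(F\<^sup>T * M * F) $$ (a, b) = (\<Sum>l<N. (\<Sum>k<N. F $$ (k, a) * M $$ (k, l)) * F $$ (l, b))"
    using assms by (simp add: index_mult_square_mat[of _ N] del: index_mult_mat assoc_mult_mat)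
  also have "\<dots> = (\<Sum>l<N. \<Sum>k<N. F $$ (k, a) * M $$ (k, l) * F $$ (l, b))"
    by (simp add: sum_distrib_right)
  also have "\<dots> = (\<Sum>k<N. \<Sum>l<N. F $$ (k, a) * M $$ (k, l) * F $$ (l, b))"
    by (rule sum.swap)
  finally show ?thesis .
qed

lemma inverse_metric_mat:
  assumes "inverse_metric N g gi"
  shows "comp_mat N g * comp_mat N gi = 1\<^sub>m N"
proof (rule eq_matI)
  fix i j assume "i < dim_row (1\<^sub>m N :: real mat)" "j < dim_col (1\<^sub>m N :: real mat)"
  then show "(comp_mat N g * comp_mat N gi) $$ (i, j) = 1\<^sub>m N $$ (i, j)"
    using assms unfolding inverse_metric_def
    by (simp add: index_mult_square_mat[of _ N] del: index_mult_mat)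
qed simp_all

lemma lorentzian_congruent_eta:
  assumes "lorentzian N g"
  obtains E where "E \<in> carrier_mat N N" "E\<^sup>T * comp_mat N g * E = comp_mat N eta"
proof -
  obtain e where e: "\<forall>i<N. \<forall>j<N. (\<Sum>a<N. \<Sum>b<N. g a b * e a i * e b j) = eta i j"
    using assms unfolding lorentzian_def by blast
  have "(comp_mat N e)\<^sup>T * comp_mat N g * comp_mat N e = comp_mat N eta"
  proof (rule eq_matI)
    fix i j assume "i < dim_row (comp_mat N eta)" "j < dim_col (comp_mat N eta)"
    then have ij: "i < N" "j < N" by simp_all
    have "((comp_mat N e)\<^sup>T * comp_mat N g * comp_mat N e) $$ (i, j)
        = (\<Sum>b<N. (\<Sum>a<N. e a i * g a b) * e b j)"
      using ij by (simp add: index_mult_square_mat[of _ N] del: index_mult_mat)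
    also have "\<dots> = (\<Sum>b<N. \<Sum>a<N. g a b * e a i * e b j)"
      by (simp add: sum_distrib_left sum_distrib_right mult_ac)
    also have "\<dots> = (\<Sum>a<N. \<Sum>b<N. g a b * e a i * e b j)"
      by (rule sum.swap)
    finally show "((comp_mat N e)\<^sup>T * comp_mat N g * comp_mat N e) $$ (i, j) = comp_mat N eta $$ (i, j)"
      using e ij by simp
  qed simp_all
  then show ?thesis
    using that[of "comp_mat N e"] by simp
qed

lemma eta_mat_transpose: "(comp_mat N eta)\<^sup>T = comp_mat N eta"
  by (intro eq_matI) (auto simp: eta_def)

lemma eta_mat_squared: "comp_mat N eta * comp_mat N eta = 1\<^sub>m N"
proof (rule eq_matI)
  fix i j assume "i < dim_row (1\<^sub>m N :: real mat)" "j < dim_col (1\<^sub>m N :: real mat)"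
  then have ij: "i < N" "j < N" by simp_all
  have "(comp_mat N eta * comp_mat N eta) $$ (i, j) = (\<Sum>k<N. eta i k * eta k j)"
    using ij by (simp add: index_mult_square_mat[of _ N] del: index_mult_mat)
  also have "\<dots> = (\<Sum>k\<in>{i}. eta i k * eta k j)"
    using ij by (intro sum.mono_neutral_right) (auto simp: eta_def)
  finally show "(comp_mat N eta * comp_mat N eta) $$ (i, j) = 1\<^sub>m N $$ (i, j)"
    using ij by (simp add: eta_def)
qed simp_all

lemma lorentzian_frame:
  assumes "lorentzian N g" "inverse_metric N g gi"
  obtains F E where "F \<in> carrier_mat N N" "E \<in> carrier_mat N N" "F * E = 1\<^sub>m N" "E * F = 1\<^sub>m N"
    "comp_mat N g = F\<^sup>T * comp_mat N eta * F" "comp_mat N gi = E * comp_mat N eta * E\<^sup>T"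
proof -
  let ?G = "comp_mat N g" and ?GI = "comp_mat N gi" and ?H = "comp_mat N eta"
  note [simp] = assoc_mult_mat[of _ N N _ N _ N]
  obtain E where E: "E \<in> carrier_mat N N" and EGE: "E\<^sup>T * ?G * E = ?H"
    using lorentzian_congruent_eta[OF assms(1)] by blast
  define F where "F = ?H * E\<^sup>T * ?G"
  have F: "F \<in> carrier_mat N N"
    unfolding F_def using E by simp
  have "F * E = ?H * (E\<^sup>T * ?G * E)"
    using E by (simp add: F_def)
  then have FE: "F * E = 1\<^sub>m N"
    by (simp add: EGE eta_mat_squared)
  have EF: "E * F = 1\<^sub>m N"
    by (rule mat_mult_left_right_inverse[OF F E FE])
  have "F\<^sup>T * ?H * F = (E * F)\<^sup>T * ?G * (E * F)"
    using E F by (simp add: EGE[symmetric] transpose_mult[of E N N F N])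
  then have "?G = F\<^sup>T * ?H * F"
    using EF by simp
  moreover have "E * ?H * E\<^sup>T = E * ?H * E\<^sup>T * (?G * ?GI)"
    using E by (simp add: inverse_metric_mat[OF assms(2)])
  then have "E * ?H * E\<^sup>T = (E * F) * ?GI"
    using E by (simp add: F_def)
  then have "?GI = E * ?H * E\<^sup>T"
    using EF by simp
  ultimately show ?thesis
    using that E F FE EF by blast
qed

section \<open>The superenergy tensor of a 2-form as a matrix\<close>

definition trace_mat :: "real mat \<Rightarrow> real" where
  "trace_mat A = (\<Sum>i<dim_row A. A $$ (i, i))"

lemma trace_mat_mult_comm:
  assumes "A \<in> carrier_mat n m" "B \<in> carrier_mat m n"
  shows "trace_mat (A * B) = trace_mat (B * A)"
proof -
  have "trace_mat (A * B) = (\<Sum>i<n. \<Sum>k<m. A $$ (i, k) * B $$ (k, i))"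
    using assms by (simp add: trace_mat_def scalar_prod_def lessThan_atLeast0)
  also have "\<dots> = (\<Sum>k<m. \<Sum>i<n. B $$ (k, i) * A $$ (i, k))"
    by (subst sum.swap) (simp add: mult.commute)
  also have "\<dots> = trace_mat (B * A)"
    using assms by (simp add: trace_mat_def scalar_prod_def lessThan_atLeast0)
  finally show ?thesis .
qed

lemma trace_mat_square: "A \<in> carrier_mat N N \<Longrightarrow> trace_mat A = (\<Sum>i<N. A $$ (i, i))"
  by (simp add: trace_mat_def)

(* The Maxwell tensor of a 2-form with component matrix P. Writing GI\<^sup>T matches the index order in
   contr, so that no symmetry of gi is needed. *)
definition superenergy_mat :: "real mat \<Rightarrow> real mat \<Rightarrow> real mat \<Rightarrow> real mat" where
  "superenergy_mat G GI P = (trace_mat (P * GI * P\<^sup>T * GI\<^sup>T) / 4) \<cdot>\<^sub>m G - P * GI * P\<^sup>T"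

lemma superenergy_mat_dim [simp]:
  "dim_row (superenergy_mat G GI P) = dim_row P" "dim_col (superenergy_mat G GI P) = dim_row P"
  by (simp_all add: superenergy_mat_def)

lemma superenergy_two_form:
  assumes "a < N" "b < N"
  shows "superenergy N g gi 2 \<Omega> a b =
    superenergy_mat (comp_mat N g) (comp_mat N gi) (comp_mat N (\<lambda>x y. \<Omega> [x, y])) $$ (a, b)"
proof -
  let ?P = "comp_mat N (\<lambda>x y. \<Omega> [x, y])" and ?GI = "comp_mat N gi"
  have PGIP: "(?P * ?GI * ?P\<^sup>T) $$ (x, z) = (\<Sum>y<N. \<Sum>w<N. \<Omega> [x, y] * \<Omega> [z, w] * gi y w)"
    if "x < N" "z < N" for x z
  proof -
    have "(?P * ?GI * ?P\<^sup>T) $$ (x, z) = (\<Sum>w<N. (\<Sum>y<N. \<Omega> [x, y] * gi y w) * \<Omega> [z, w])"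
      using that by (simp add: index_mult_square_mat[of _ N] del: index_mult_mat)
    also have "\<dots> = (\<Sum>w<N. \<Sum>y<N. \<Omega> [x, y] * \<Omega> [z, w] * gi y w)"
      by (simp add: sum_distrib_left sum_distrib_right mult_ac)
    also have "\<dots> = (\<Sum>y<N. \<Sum>w<N. \<Omega> [x, y] * \<Omega> [z, w] * gi y w)"
      by (rule sum.swap)
    finally show ?thesis .
  qed
  have "trace_mat (?P * ?GI * ?P\<^sup>T * ?GI\<^sup>T)
      = (\<Sum>x<N. \<Sum>z<N. \<Sum>y<N. \<Sum>w<N. \<Omega> [x, y] * \<Omega> [z, w] * (gi x z * gi y w))"
    by (simp add: trace_mat_square[of _ N] index_mult_square_mat[of "?P * ?GI * ?P\<^sup>T" N]
        PGIP sum_distrib_left sum_distrib_right mult_ac del: index_mult_mat)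
  also have "\<dots> = (\<Sum>x<N. \<Sum>y<N. \<Sum>z<N. \<Sum>w<N. \<Omega> [x, y] * \<Omega> [z, w] * (gi x z * gi y w))"
    by (rule sum.cong[OF refl], rule sum.swap)
  also have "\<dots> = fdot N gi 2 \<Omega>"
    unfolding fdot_def numeral_2_eq_2 sum_idx_Suc idx_0 by (simp add: contr_def lessThan_Suc mult_ac)
  finally have "trace_mat (?P * ?GI * ?P\<^sup>T * ?GI\<^sup>T) = fdot N gi 2 \<Omega>" .
  moreover have "(\<Sum>xs\<in>idx N 1. \<Sum>ys\<in>idx N 1. \<Omega> (a # xs) * \<Omega> (b # ys) * contr gi xs ys)
      = (?P * ?GI * ?P\<^sup>T) $$ (a, b)"
    unfolding One_nat_def sum_idx_Suc idx_0 using assms by (simp add: PGIP contr_def del: index_mult_mat)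
  ultimately show ?thesis
    using assms by (simp add: superenergy_def superenergy_mat_def numeral_2_eq_2)
qed

lemma superenergy_mat_congruence:
  assumes F: "F \<in> carrier_mat N N" and E: "E \<in> carrier_mat N N"
    and H: "H \<in> carrier_mat N N" and X: "X \<in> carrier_mat N N"
    and FE: "F * E = 1\<^sub>m N" and H_sym: "H\<^sup>T = H"
  shows "superenergy_mat (F\<^sup>T * H * F) (E * H * E\<^sup>T) (F\<^sup>T * X * F) = F\<^sup>T * superenergy_mat H H X * F"
proof -
  note [simp] = assoc_mult_mat[of _ N N _ N _ N]
  let ?M = "X * H * X\<^sup>T"
  have M: "?M \<in> carrier_mat N N" using X H by simp
  have ETFT: "E\<^sup>T * F\<^sup>T = 1\<^sub>m N"
    using FE F E by (metis transpose_mult transpose_one)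
  have "(F\<^sup>T * X * F) * (E * H * E\<^sup>T) * (F\<^sup>T * X * F)\<^sup>T = F\<^sup>T * X * (F * E) * H * (E\<^sup>T * F\<^sup>T) * X\<^sup>T * F"
    using F E H X by (simp add: transpose_mult[of _ N N _ N])
  then have PGP: "(F\<^sup>T * X * F) * (E * H * E\<^sup>T) * (F\<^sup>T * X * F)\<^sup>T = F\<^sup>T * ?M * F"
    using F E H X by (simp add: FE ETFT)
  have GI_sym: "(E * H * E\<^sup>T)\<^sup>T = E * H * E\<^sup>T"
    using E H by (simp add: transpose_mult[of _ N N _ N] H_sym)
  have "trace_mat (F\<^sup>T * ?M * F * (E * H * E\<^sup>T)) = trace_mat (F\<^sup>T * (?M * H * E\<^sup>T))"
    using F E H X FE by (simp flip: assoc_mult_mat[of F N N E N _ N])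
  also have "\<dots> = trace_mat (?M * H * E\<^sup>T * F\<^sup>T)"
    using F E H X by (subst trace_mat_mult_comm[of _ N N]) simp_all
  also have "\<dots> = trace_mat (?M * H)"
    using F E H X by (simp add: ETFT)
  finally have tr: "trace_mat (F\<^sup>T * ?M * F * (E * H * E\<^sup>T)) = trace_mat (?M * H)" .
  define c where "c = trace_mat (?M * H) / 4"
  have "F\<^sup>T * (c \<cdot>\<^sub>m H - ?M) * F = (c \<cdot>\<^sub>m (F\<^sup>T * H) - F\<^sup>T * ?M) * F"
    using F H M by (subst mult_minus_distrib_mat[of _ N N]) (auto simp: mult_smult_distrib[of _ N N])
  also have "\<dots> = c \<cdot>\<^sub>m (F\<^sup>T * H * F) - F\<^sup>T * ?M * F"
    using F H M by (subst minus_mult_distrib_mat[of _ N N]) (auto simp: mult_smult_assoc_mat[of _ N N])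
  finally have "F\<^sup>T * (c \<cdot>\<^sub>m H - ?M) * F = c \<cdot>\<^sub>m (F\<^sup>T * H * F) - F\<^sup>T * ?M * F" .
  then show ?thesis
    unfolding superenergy_mat_def PGP GI_sym tr H_sym c_def by simp
qed

lemma sum_mult_eta:
  assumes "j' < N"
  shows "(\<Sum>j<N. m j * eta j j') = m j' * eta j' j'"
proof -
  have "(\<Sum>j<N. m j * eta j j') = (\<Sum>j<N. if j = j' then m j' * eta j' j' else 0)"
    by (intro sum.cong refl) (auto simp: eta_def)
  then show ?thesis
    using assms by simp
qed

lemma eta_sandwich_index:
  assumes "X \<in> carrier_mat N N" "k < N" "l < N"
  shows "(X * comp_mat N eta * X\<^sup>T) $$ (k, l) = (\<Sum>j<N. X $$ (k, j) * eta j j * X $$ (l, j))"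
proof -
  have "(X * comp_mat N eta * X\<^sup>T) $$ (k, l) = (\<Sum>j<N. (\<Sum>i<N. X $$ (k, i) * eta i j) * X $$ (l, j))"
    using assms by (simp add: index_mult_square_mat[of _ N] del: index_mult_mat)
  then show ?thesis
    by (simp add: sum_mult_eta)
qed

lemma trace_mat_mult_eta:
  assumes "M \<in> carrier_mat N N"
  shows "trace_mat (M * comp_mat N eta) = (\<Sum>a<N. M $$ (a, a) * eta a a)"
  using assms
  by (simp add: trace_mat_square[of _ N] index_mult_square_mat[of _ N] sum_mult_eta del: index_mult_mat)

lemma superenergy_mat_eta_index:
  assumes X: "X \<in> carrier_mat N N" and "k < N" "l < N"
  shows "superenergy_mat (comp_mat N eta) (comp_mat N eta) X $$ (k, l) =
    (\<Sum>a<N. \<Sum>j<N. X $$ (a, j) * eta j j * X $$ (a, j) * eta a a) / 4 * eta k l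
    - (\<Sum>j<N. X $$ (k, j) * eta j j * X $$ (l, j))"
proof -
  have "trace_mat (X * comp_mat N eta * X\<^sup>T * comp_mat N eta)
      = (\<Sum>a<N. \<Sum>j<N. X $$ (a, j) * eta j j * X $$ (a, j) * eta a a)"
    using X by (simp add: trace_mat_mult_eta eta_sandwich_index sum_distrib_right del: index_mult_mat)
  then show ?thesis
    using assms by (simp del: index_mult_mat
        add: index_mult_mat(2,3) superenergy_mat_def eta_mat_transpose eta_sandwich_index)
qed

lemma wedge_two_congruence:
  assumes "F \<in> carrier_mat N N" "a < N" "b < N"
  shows "wedge 2 (\<lambda>r x. \<Sum>i<N. (if r = 0 then u i else v i) * F $$ (i, x)) [a, b]
     = (F\<^sup>T * comp_mat N (\<lambda>i j. u i * v j - v i * u j) * F) $$ (a, b)"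
proof -
  have "(F\<^sup>T * comp_mat N (\<lambda>i j. u i * v j - v i * u j) * F) $$ (a, b)
     = (\<Sum>k<N. \<Sum>l<N. (u k * F $$ (k, a)) * (v l * F $$ (l, b)) - (v k * F $$ (k, a)) * (u l * F $$ (l, b)))"
    unfolding index_congruence[OF assms(1) comp_mat_carrier assms(2,3)]
    using assms by (intro sum.cong refl) (simp add: algebra_simps)
  also have "\<dots> = (\<Sum>i<N. u i * F $$ (i, a)) * (\<Sum>i<N. v i * F $$ (i, b))
      - (\<Sum>i<N. v i * F $$ (i, a)) * (\<Sum>i<N. u i * F $$ (i, b))"
    by (simp add: sum_subtractf sum_product)
  finally show ?thesis
    by (simp add: wedge_two)
qed

section \<open>Duality rotations of 2-forms in dimension 4\<close>

lemma less_4_cases: "i < (4 :: nat) \<longleftrightarrow> i = 0 \<or> i = 1 \<or> i = 2 \<or> i = 3"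
  by auto

lemma sum_lessThan_4: "(\<Sum>k<(4::nat). f k) = f 0 + f 1 + f 2 + (f 3 :: real)"
  by (simp add: numeral_eq_Suc lessThan_Suc)

definition skew4 :: "real \<Rightarrow> real \<Rightarrow> real \<Rightarrow> real \<Rightarrow> real \<Rightarrow> real \<Rightarrow> real mat" where
  "skew4 a01 a02 a03 a12 a13 a23 = mat 4 4 (\<lambda>(i, j).
     [[0, a01, a02, a03], [- a01, 0, a12, a13], [- a02, - a12, 0, a23], [- a03, - a13, - a23, 0]] ! i ! j)"

lemma skew4_carrier [simp]: "skew4 a01 a02 a03 a12 a13 a23 \<in> carrier_mat 4 4"
  and skew4_dim [simp]: "dim_row (skew4 a01 a02 a03 a12 a13 a23) = 4" "dim_col (skew4 a01 a02 a03 a12 a13 a23) = 4"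
  by (simp_all add: skew4_def)

lemma skew4_index:
  shows
    "skew4 a01 a02 a03 a12 a13 a23 $$ (0, 0) = 0"
    "skew4 a01 a02 a03 a12 a13 a23 $$ (0, 1) = a01"
    "skew4 a01 a02 a03 a12 a13 a23 $$ (0, 2) = a02"
    "skew4 a01 a02 a03 a12 a13 a23 $$ (0, 3) = a03"
    "skew4 a01 a02 a03 a12 a13 a23 $$ (1, 0) = - a01"
    "skew4 a01 a02 a03 a12 a13 a23 $$ (1, 1) = 0"
    "skew4 a01 a02 a03 a12 a13 a23 $$ (1, 2) = a12"
    "skew4 a01 a02 a03 a12 a13 a23 $$ (1, 3) = a13"
    "skew4 a01 a02 a03 a12 a13 a23 $$ (2, 0) = - a02"
    "skew4 a01 a02 a03 a12 a13 a23 $$ (2, 1) = - a12"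
    "skew4 a01 a02 a03 a12 a13 a23 $$ (2, 2) = 0"
    "skew4 a01 a02 a03 a12 a13 a23 $$ (2, 3) = a23"
    "skew4 a01 a02 a03 a12 a13 a23 $$ (3, 0) = - a03"
    "skew4 a01 a02 a03 a12 a13 a23 $$ (3, 1) = - a13"
    "skew4 a01 a02 a03 a12 a13 a23 $$ (3, 2) = - a23"
    "skew4 a01 a02 a03 a12 a13 a23 $$ (3, 3) = 0"
  by (simp_all add: skew4_def)

(* In this context simp rewrites the index 1 :: nat to Suc 0, so the entry rules are
   declared in that normal form. *)

declare skew4_index[simplified, simp]

lemma skew_mat4_eq_skew4:
  assumes X: "X \<in> carrier_mat 4 4" and skew: "X\<^sup>T = - X"
  shows "X = skew4 (X $$ (0, 1)) (X $$ (0, 2)) (X $$ (0, 3)) (X $$ (1, 2)) (X $$ (1, 3)) (X $$ (2, 3))"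
proof (rule eq_matI)
  have entry: "X $$ (j, i) = - X $$ (i, j)" if "i < 4" "j < 4" for i j
    using arg_cong[OF skew, of "\<lambda>A. A $$ (i, j)"] X that by simp
  fix i j assume "i < dim_row (skew4 (X $$ (0, 1)) (X $$ (0, 2)) (X $$ (0, 3)) (X $$ (1, 2)) (X $$ (1, 3)) (X $$ (2, 3)))"
    "j < dim_col (skew4 (X $$ (0, 1)) (X $$ (0, 2)) (X $$ (0, 3)) (X $$ (1, 2)) (X $$ (1, 3)) (X $$ (2, 3)))"
  then have "i < 4" "j < 4" by (simp_all add: skew4_def)
  then show "X $$ (i, j) = skew4 (X $$ (0, 1)) (X $$ (0, 2)) (X $$ (0, 3)) (X $$ (1, 2)) (X $$ (1, 3)) (X $$ (2, 3)) $$ (i, j)"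
    unfolding less_4_cases using entry[of 0 0] entry[of 1 1] entry[of 2 2] entry[of 3 3]
      entry[of 0 1] entry[of 0 2] entry[of 0 3] entry[of 1 2] entry[of 1 3] entry[of 2 3]
    by (auto simp: skew4_def)
qed (use X in \<open>simp_all add: skew4_def\<close>)

lemma skew4_eq_zero_iff:
  "skew4 a01 a02 a03 a12 a13 a23 = 0\<^sub>m 4 4 \<longleftrightarrow>
     a01 = 0 \<and> a02 = 0 \<and> a03 = 0 \<and> a12 = 0 \<and> a13 = 0 \<and> a23 = 0"
proof
  assume "skew4 a01 a02 a03 a12 a13 a23 = 0\<^sub>m 4 4"
  then have "skew4 a01 a02 a03 a12 a13 a23 $$ (i, j) = 0" if "i < 4" "j < 4" for i j
    using that by simp
  from this[of 0 1] this[of 0 2] this[of 0 3] this[of 1 2] this[of 1 3] this[of 2 3]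
  show "a01 = 0 \<and> a02 = 0 \<and> a03 = 0 \<and> a12 = 0 \<and> a13 = 0 \<and> a23 = 0"
    by simp
qed (intro eq_matI, auto simp: less_4_cases)

(* The Hodge dual *F in an orthonormal frame of Minkowski space. *)
definition hodge4 :: "real mat \<Rightarrow> real mat" where
  "hodge4 X = skew4 (X $$ (2, 3)) (- X $$ (1, 3)) (X $$ (1, 2)) (- X $$ (0, 3)) (X $$ (0, 2)) (- X $$ (0, 1))"

definition duality_rotation :: "real \<Rightarrow> real \<Rightarrow> real mat \<Rightarrow> real mat" where
  "duality_rotation c s X = c \<cdot>\<^sub>m X + s \<cdot>\<^sub>m hodge4 X"

lemma duality_rotation_skew4:
  "duality_rotation c s (skew4 a01 a02 a03 a12 a13 a23) =
     skew4 (c * a01 + s * a23) (c * a02 - s * a13) (c * a03 + s * a12)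
       (c * a12 - s * a03) (c * a13 + s * a02) (c * a23 - s * a01)"
  unfolding duality_rotation_def hodge4_def
  by (rule eq_matI) (auto simp: skew4_def less_4_cases)

lemma superenergy_mat_skew4_duality_rotation:
  "superenergy_mat (comp_mat 4 eta) (comp_mat 4 eta) (duality_rotation c s (skew4 a01 a02 a03 a12 a13 a23)) =
     (c\<^sup>2 + s\<^sup>2) \<cdot>\<^sub>m superenergy_mat (comp_mat 4 eta) (comp_mat 4 eta) (skew4 a01 a02 a03 a12 a13 a23)"
proof (rule eq_matI)
  let ?T = "superenergy_mat (comp_mat 4 eta) (comp_mat 4 eta)" and ?X = "skew4 a01 a02 a03 a12 a13 a23"
  fix i j assume "i < dim_row ((c\<^sup>2 + s\<^sup>2) \<cdot>\<^sub>m ?T ?X)" "j < dim_col ((c\<^sup>2 + s\<^sup>2) \<cdot>\<^sub>m ?T ?X)"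
  then have "i < 4" "j < 4" by simp_all
  then show "?T (duality_rotation c s ?X) $$ (i, j) = ((c\<^sup>2 + s\<^sup>2) \<cdot>\<^sub>m ?T ?X) $$ (i, j)"
    unfolding duality_rotation_skew4 less_4_cases
    by (elim disjE)
      (simp_all add: superenergy_mat_eta_index sum_lessThan_4 eta_def field_simps power2_eq_square)
qed (simp_all add: duality_rotation_skew4)

lemma duality_rotation_skew4_nonzero:
  assumes "c\<^sup>2 + s\<^sup>2 = 1" "skew4 a01 a02 a03 a12 a13 a23 \<noteq> 0\<^sub>m 4 4"
  shows "duality_rotation c s (skew4 a01 a02 a03 a12 a13 a23) \<noteq> 0\<^sub>m 4 4"
proof
  have undo: "c * (c * x + s * y) - s * (c * y - s * x) = x" for x y
  proof -
    have "c * (c * x + s * y) - s * (c * y - s * x) = (c\<^sup>2 + s\<^sup>2) * x"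
      by (simp add: algebra_simps power2_eq_square)
    then show ?thesis using assms(1) by simp
  qed
  assume "duality_rotation c s (skew4 a01 a02 a03 a12 a13 a23) = 0\<^sub>m 4 4"
  then have "c * a01 + s * a23 = 0" "c * a23 - s * a01 = 0" "c * a02 - s * a13 = 0"
    "c * a13 + s * a02 = 0" "c * a03 + s * a12 = 0" "c * a12 - s * a03 = 0"
    unfolding duality_rotation_skew4 skew4_eq_zero_iff by simp_all
  then show False
    using assms(2) undo[of a01 a23] undo[of a13 a02] undo[of a03 a12]
      undo[of a23 "- a01"] undo[of a02 "- a13"] undo[of a12 "- a03"]
    by (auto simp: skew4_eq_zero_iff)
qed

definition plucker4 :: "real mat \<Rightarrow> real" where
  "plucker4 X = X $$ (0, 1) * X $$ (2, 3) - X $$ (0, 2) * X $$ (1, 3) + X $$ (0, 3) * X $$ (1, 2)"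

lemma plucker4_duality_rotation:
  assumes "X \<in> carrier_mat 4 4"
  shows "plucker4 (duality_rotation c s X) = (c\<^sup>2 - s\<^sup>2) * plucker4 X
    + c * s * ((X $$ (2, 3))\<^sup>2 + (X $$ (1, 3))\<^sup>2 + (X $$ (1, 2))\<^sup>2
      - (X $$ (0, 1))\<^sup>2 - (X $$ (0, 2))\<^sup>2 - (X $$ (0, 3))\<^sup>2)"
  using assms by (simp add: plucker4_def duality_rotation_def hodge4_def algebra_simps power2_eq_square)

lemma duality_rotation_plucker4_zero:
  assumes "X \<in> carrier_mat 4 4"
  obtains c s where "c\<^sup>2 + s\<^sup>2 = 1" "plucker4 (duality_rotation c s X) = 0"
proof -
  define f where "f t = plucker4 (duality_rotation (cos t) (sin t) X)" for t
  have f_0: "f 0 = plucker4 X" and f_pi2: "f (pi / 2) = - plucker4 X"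
    unfolding f_def plucker4_duality_rotation[OF assms] by simp_all
  have "continuous_on {0 .. pi / 2} f"
    unfolding f_def plucker4_duality_rotation[OF assms] by (intro continuous_intros)
  then obtain t where "f t = 0"
    using IVT'[of f 0 0 "pi / 2"] IVT2'[of f "pi / 2" 0 0] f_0 f_pi2
    by (cases "plucker4 X \<le> 0") (auto simp: f_def)
  then show ?thesis
    using that[of "cos t" "sin t"] by (simp add: f_def)
qed

lemma plucker_relations_skew4:
  assumes "a01 * a23 - a02 * a13 + a03 * a12 = 0" and "i < 4" "j < 4" "k < 4" "l < 4"
  shows "skew4 a01 a02 a03 a12 a13 a23 $$ (i, j) * skew4 a01 a02 a03 a12 a13 a23 $$ (k, l) =
    skew4 a01 a02 a03 a12 a13 a23 $$ (k, i) * skew4 a01 a02 a03 a12 a13 a23 $$ (l, j) -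
    skew4 a01 a02 a03 a12 a13 a23 $$ (k, j) * skew4 a01 a02 a03 a12 a13 a23 $$ (l, i)"
proof -
  have "a01 * a23 = a02 * a13 - a03 * a12"
    using assms(1) by simp
  then show ?thesis
    using assms(2-5) unfolding less_4_cases by (elim disjE) (simp_all add: algebra_simps)
qed

lemma skew_mat4_duality_rotation_decomposable:
  assumes X: "X \<in> carrier_mat 4 4" and skew: "X\<^sup>T = - X" and nonzero: "X \<noteq> 0\<^sub>m 4 4"
  obtains R u v where "R \<in> carrier_mat 4 4" "R \<noteq> 0\<^sub>m 4 4"
    "superenergy_mat (comp_mat 4 eta) (comp_mat 4 eta) R = superenergy_mat (comp_mat 4 eta) (comp_mat 4 eta) X"
    "\<forall>i<4. \<forall>j<4. R $$ (i, j) = u i * v j - v i * u j"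
proof -
  obtain c s where cs: "c\<^sup>2 + s\<^sup>2 = 1" and plucker: "plucker4 (duality_rotation c s X) = 0"
    using duality_rotation_plucker4_zero[OF X] by blast
  define a01 a02 a03 a12 a13 a23 where "a01 = X $$ (0, 1)" and "a02 = X $$ (0, 2)"
    and "a03 = X $$ (0, 3)" and "a12 = X $$ (1, 2)" and "a13 = X $$ (1, 3)" and "a23 = X $$ (2, 3)"
  have X_eq: "X = skew4 a01 a02 a03 a12 a13 a23"
    unfolding a01_def a02_def a03_def a12_def a13_def a23_def by (rule skew_mat4_eq_skew4[OF X skew])
  define R where "R = duality_rotation c s X"
  obtain b01 b02 b03 b12 b13 b23 where R_eq: "R = skew4 b01 b02 b03 b12 b13 b23"
    unfolding R_def X_eq duality_rotation_skew4 by blast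
  have R_nonzero: "R \<noteq> 0\<^sub>m 4 4"
    using duality_rotation_skew4_nonzero[OF cs] nonzero unfolding R_def X_eq by blast
  then obtain k l where kl: "k < 4" "l < 4" "R $$ (k, l) \<noteq> 0"
    using nonzero_mat_entry[of R 4 4] R_eq by auto
  have "b01 * b23 - b02 * b13 + b03 * b12 = 0"
    using plucker unfolding R_def[symmetric] R_eq by (simp add: plucker4_def)
  then have "\<exists>u v. \<forall>i\<in>{..<4}. \<forall>j\<in>{..<4}. R $$ (i, j) = u i * v j - v i * u j"
    using kl unfolding R_eq
    by (intro decomposition_if_plucker[where w = "\<lambda>i j. skew4 b01 b02 b03 b12 b13 b23 $$ (i, j)",
          OF kl(3)[unfolded R_eq]] plucker_relations_skew4) auto
  moreover have "superenergy_mat (comp_mat 4 eta) (comp_mat 4 eta) R =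
      superenergy_mat (comp_mat 4 eta) (comp_mat 4 eta) X"
    unfolding R_def X_eq superenergy_mat_skew4_duality_rotation cs by (intro eq_matI) simp_all
  ultimately show ?thesis
    using that[of R] R_nonzero by (auto simp: R_eq)
qed

lemma two_form_mat_skew:
  assumes "is_form N 2 \<Omega>"
  shows "(comp_mat N (\<lambda>x y. \<Omega> [x, y]))\<^sup>T = - comp_mat N (\<lambda>x y. \<Omega> [x, y])"
  by (intro eq_matI) (auto intro: two_form_skew[OF assms])

lemma superenergy_two_form_in_frame:
  assumes F: "F \<in> carrier_mat N N" and E: "E \<in> carrier_mat N N" and FE: "F * E = 1\<^sub>m N"
    and G: "comp_mat N g = F\<^sup>T * comp_mat N eta * F" and GI: "comp_mat N gi = E * comp_mat N eta * E\<^sup>T"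
    and X: "X \<in> carrier_mat N N" and P: "comp_mat N (\<lambda>x y. \<Omega> [x, y]) = F\<^sup>T * X * F"
    and "a < N" "b < N"
  shows "superenergy N g gi 2 \<Omega> a b = (F\<^sup>T * superenergy_mat (comp_mat N eta) (comp_mat N eta) X * F) $$ (a, b)"
  unfolding superenergy_two_form[OF assms(8,9)] G GI P
  by (subst superenergy_mat_congruence[OF F E _ X FE eta_mat_transpose]) simp_all

lemma two_form_frame_components:
  assumes F: "F \<in> carrier_mat N N" and E: "E \<in> carrier_mat N N" and EF: "E * F = 1\<^sub>m N"
    and form: "is_form N 2 \<Omega>" and xs: "xs \<in> idx N 2" "\<Omega> xs \<noteq> 0"
  obtains X where "X \<in> carrier_mat N N" "X\<^sup>T = - X" "X \<noteq> 0\<^sub>m N N"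
    "comp_mat N (\<lambda>x y. \<Omega> [x, y]) = F\<^sup>T * X * F"
proof
  let ?P = "comp_mat N (\<lambda>x y. \<Omega> [x, y])"
  show X: "E\<^sup>T * ?P * E \<in> carrier_mat N N"
    using E by simp
  show P_eq: "?P = F\<^sup>T * (E\<^sup>T * ?P * E) * F"
    using congruence_cancel[OF F E _ EF, of ?P] by simp
  show "(E\<^sup>T * ?P * E)\<^sup>T = - (E\<^sup>T * ?P * E)"
    using E by (simp add: transpose_mult[of _ N N _ N] assoc_mult_mat[of _ N N _ N _ N]
        two_form_mat_skew[OF form])
  obtain x y where "xs = [x, y]" "x < N" "y < N"
    using xs(1) by (elim idx_twoE)
  then show "E\<^sup>T * ?P * E \<noteq> 0\<^sub>m N N"
    using xs(2) F arg_cong[OF P_eq, of "\<lambda>A. A $$ (x, y)"] by auto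
qed

lemma simple_superenergy_two_form_dim4:
  assumes lor: "lorentzian 4 g" and inv: "inverse_metric 4 g gi" and form: "is_form 4 2 \<Omega>"
    and xs: "xs \<in> idx 4 2" "\<Omega> xs \<noteq> 0"
  shows "simple_superenergy 4 g gi 2 \<Omega>"
proof -
  let ?H = "comp_mat 4 eta" and ?P = "comp_mat 4 (\<lambda>x y. \<Omega> [x, y])"
  obtain F E where F: "F \<in> carrier_mat 4 4" and E: "E \<in> carrier_mat 4 4"
    and FE: "F * E = 1\<^sub>m 4" and EF: "E * F = 1\<^sub>m 4"
    and G: "comp_mat 4 g = F\<^sup>T * ?H * F" and GI: "comp_mat 4 gi = E * ?H * E\<^sup>T"
    using lorentzian_frame[OF lor inv] by blast
  obtain X where X: "X \<in> carrier_mat 4 4" "X\<^sup>T = - X" "X \<noteq> 0\<^sub>m 4 4" and P_eq: "?P = F\<^sup>T * X * F"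
    using two_form_frame_components[OF F E EF form xs] by blast
  then obtain R u v where R: "R \<in> carrier_mat 4 4" "R \<noteq> 0\<^sub>m 4 4"
    and R_energy: "superenergy_mat ?H ?H R = superenergy_mat ?H ?H X"
    and R_uv: "\<forall>i<4. \<forall>j<4. R $$ (i, j) = u i * v j - v i * u j"
    using skew_mat4_duality_rotation_decomposable[OF X] by blast
  define \<theta> :: "nat \<Rightarrow> nat \<Rightarrow> real"
    where "\<theta> r x = (\<Sum>i<4. (if r = 0 then u i else v i) * F $$ (i, x))" for r x
  have "R = comp_mat 4 (\<lambda>i j. u i * v j - v i * u j)"
    using R(1) R_uv by (intro eq_matI) auto
  then have "wedge 2 \<theta> [x, y] = (F\<^sup>T * R * F) $$ (x, y)" if "x < 4" "y < 4" for x y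
    unfolding \<theta>_def using wedge_two_congruence[OF F that] by simp
  then have W: "comp_mat 4 (\<lambda>x y. wedge 2 \<theta> [x, y]) = F\<^sup>T * R * F"
    using F by (intro eq_matI) (simp_all del: index_mult_mat add: index_mult_mat(2,3))
  have "F\<^sup>T * R * F \<noteq> 0\<^sub>m 4 4"
    using congruence_cancel[OF E F R(1) FE] R(2) E by auto
  then obtain a b where ab: "a < 4" "b < 4" "(F\<^sup>T * R * F) $$ (a, b) \<noteq> 0"
    using nonzero_mat_entry[of "F\<^sup>T * R * F" 4 4] F R(1) by auto
  show ?thesis
  proof (rule simple_superenergyI[of 2 4 "[a, b]" \<theta>])
    show "[a, b] \<in> idx 4 2" "wedge 2 \<theta> [a, b] \<noteq> 0"
      using ab arg_cong[OF W, of "\<lambda>A. A $$ (a, b)"] by (simp_all add: in_idx_iff)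
    show "superenergy 4 g gi 2 \<Omega> c d = superenergy 4 g gi 2 (wedge 2 \<theta>) c d" if "c < 4" "d < 4" for c d
      using superenergy_two_form_in_frame[OF F E FE G GI X(1) P_eq that]
        superenergy_two_form_in_frame[OF F E FE G GI R(1) W that] R_energy by simp
  qed simp_all
qed

theorem mainTheorem19:
  fixes N p :: nat and g gi :: "nat \<Rightarrow> nat \<Rightarrow> real" and \<Omega> :: "nat list \<Rightarrow> real"
  assumes "N \<le> 4"
    and "lorentzian N g" and "inverse_metric N g gi"
    and "1 \<le> p" and "p \<le> N"
    and "is_form N p \<Omega>"
    and "\<exists>xs \<in> idx N p. \<Omega> xs \<noteq> 0"
  shows "\<exists>q \<theta>. 1 \<le> q \<and> q \<le> N \<and> lin_indep_forms N q \<theta> \<and>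
           (\<forall>a<N. \<forall>b<N. superenergy N g gi p \<Omega> a b = superenergy N g gi q (wedge q \<theta>) a b)"
proof -
  obtain xs where xs: "xs \<in> idx N p" "\<Omega> xs \<noteq> 0"
    using assms(7) by blast
  consider "p = 1" | "p = N" | "p = 2" "N = 3" | "p = 2" "N = 4" | "p = 3" "N = 4"
    using assms(1,4,5) by linarith
  then have "simple_superenergy N g gi p \<Omega>"
  proof cases
    case 1
    with xs assms(5) show ?thesis
      using simple_superenergy_if_decomposable[OF decomposable_one_form] by simp
  next
    case 2
    with xs assms(4-6) show ?thesis
      using simple_superenergy_if_decomposable[OF decomposable_top_form] by simp
  next
    case 3
    with xs assms(6) show ?thesis
      using simple_superenergy_if_decomposable[OF decomposable_two_form_dim_le_3] by simp
  next
    case 4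
    with xs assms(2,3,6) show ?thesis
      using simple_superenergy_two_form_dim4 by simp
  next
    case 5
    with xs assms(6) show ?thesis
      using simple_superenergy_if_decomposable[OF decomposable_three_form_dim4] by simp
  qed
  then show ?thesis
    unfolding simple_superenergy_def .
qed

end
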